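(* For $n\ge2$ and variables $x_1,\dots,x_{n-1}$, $y_1,\dots,y_{n-1}$, $z_1,\dots,z_n$, define $$\hat P_n=\sum_{\sigma\in S_n}(-1)^{\ell(\sigma)}\prod_{m=1}^{n-1}\Big(\prod_{k=1}^{m}(1+y_mz_{\sigma(k)})\prod_{k=m+1}^{n}(1-x_mz_{\sigma(k)})\Big),$$ where $\ell(\sigma)$ is the length (number of inversions) of $\sigma$. Then $$\hat P_n=\prod_{i=1}^{n-1}(x_i+y_i)\prod_{1\le i<j\le n-1}(x_i+y_j)\prod_{1\le i<j\le n}(z_i-z_j).$$ *)

theory Defs
  imports "HOL-Combinatorics.Permutations"
begin

definition perm_length :: "nat \<Rightarrow> (nat \<Rightarrow> nat) \<Rightarrow> nat" where
  "perm_length n \<sigma> = card {(i, j). 1 \<le> i \<and> i < j \<and> j \<le> n \<and> \<sigma> j < \<sigma> i}"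

definition P_hat :: "nat \<Rightarrow> (nat \<Rightarrow> 'a::comm_ring_1) \<Rightarrow> (nat \<Rightarrow> 'a) \<Rightarrow> (nat \<Rightarrow> 'a) \<Rightarrow> 'a" where
  "P_hat n x y z = (\<Sum>\<sigma> | \<sigma> permutes {1..n}.
      (-1) ^ perm_length n \<sigma> *
      (\<Prod>m=1..n-1. (\<Prod>k=1..m. 1 + y m * z (\<sigma> k)) * (\<Prod>k=m+1..n. 1 - x m * z (\<sigma> k))))"

end

theory Submission
  imports Defs
begin

text \<open>
  \<open>P_hat\<close> is the alternant \<open>det (R\<^sub>k (z\<^sub>j))\<close> of the polynomial rows
  \<open>R\<^sub>k t = (\<Prod>m<k. 1 - x\<^sub>m t) * (\<Prod>m\<ge>k. 1 + y\<^sub>m t)\<close>, because \<open>(-1)\<close> to the number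
  of inversions is the sign of a permutation. Subtracting row \<open>k + 1\<close> from row \<open>k\<close> replaces the
  factor \<open>1 + y\<^sub>k t\<close> by \<open>(x\<^sub>k + y\<^sub>k) t\<close>; repeating this \<open>n - 1\<close> times, with the
  next factor \<open>1 + y\<^sub>k\<^sub>+\<^sub>d t\<close> in round \<open>d\<close>, pulls out every \<open>x\<^sub>i + y\<^sub>j\<close> with \<open>i \<le> j\<close> and
  leaves the rows \<open>t\<^sup>n\<^sup>-\<^sup>k (\<Prod>m<k. 1 - x\<^sub>m t)\<close>. Adding multiples of the previous rows
  removes the factors \<open>1 - x\<^sub>m t\<close>, and what remains is the Vandermonde alternant
  \<open>det (z\<^sub>j\<^sup>n\<^sup>-\<^sup>k) = (\<Prod>i<j. z\<^sub>i - z\<^sub>j)\<close>.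
\<close>

section \<open>Alternants\<close>

definition alternant :: "nat \<Rightarrow> (nat \<Rightarrow> 'a::comm_ring_1 \<Rightarrow> 'a) \<Rightarrow> (nat \<Rightarrow> 'a) \<Rightarrow> 'a" where
  "alternant n f z = (\<Sum>\<sigma> | \<sigma> permutes {1..n}. of_int (sign \<sigma>) * (\<Prod>k=1..n. f k (z (\<sigma> k))))"

lemma alternant_cong:
  assumes "\<And>k t. k \<in> {1..n} \<Longrightarrow> f k t = g k t"
  shows "alternant n f z = alternant n g z"
  unfolding alternant_def using assms by (intro sum.cong refl arg_cong2[where f="(*)"] prod.cong) auto

lemma alternant_linear_row:
  assumes k: "k \<in> {1..n}" and row: "\<And>t. f k t = a * g t + b * h t"
  shows "alternant n f z = a * alternant n (f(k := g)) z + b * alternant n (f(k := h)) z"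
proof -
  have split_row: "(\<Prod>i=1..n. F i (z (\<sigma> i))) = F k (z (\<sigma> k)) * (\<Prod>i\<in>{1..n}-{k}. F i (z (\<sigma> i)))"
    for F :: "nat \<Rightarrow> 'a \<Rightarrow> 'a" and \<sigma>
    using k by (simp add: prod.remove)
  have other_rows: "(\<Prod>i\<in>{1..n}-{k}. (F(k := G)) i (z (\<sigma> i))) = (\<Prod>i\<in>{1..n}-{k}. F i (z (\<sigma> i)))"
    for F :: "nat \<Rightarrow> 'a \<Rightarrow> 'a" and G \<sigma>
    by (intro prod.cong) auto
  show ?thesis
    unfolding alternant_def sum_distrib_left sum.distrib[symmetric]
    by (intro sum.cong refl, subst (1 2 3) split_row) (simp add: other_rows row algebra_simps)
qed

lemma alternant_equal_rows:
  assumes k: "k \<in> {1..n}" and l: "l \<in> {1..n}" and "k \<noteq> l" and eq: "\<And>t. f k t = f l t"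
  shows "alternant n f z = 0"
proof -
  define \<tau> where "\<tau> = Transposition.transpose k l"
  define T where "T \<sigma> = of_int (sign \<sigma>) * (\<Prod>i=1..n. f i (z (\<sigma> i)))" for \<sigma>
  let ?S = "{\<sigma>. \<sigma> permutes {1..n}}"
  let ?S1 = "{\<sigma>. \<sigma> permutes {1..n} \<and> \<sigma> k < \<sigma> l}"
  let ?S2 = "{\<sigma>. \<sigma> permutes {1..n} \<and> \<sigma> l < \<sigma> k}"
  have \<tau>: "\<tau> permutes {1..n}" unfolding \<tau>_def using k l by (rule permutes_swap_id)
  have \<tau>_involution: "\<sigma> \<circ> \<tau> \<circ> \<tau> = \<sigma>" for \<sigma> :: "nat \<Rightarrow> nat"
    by (simp add: \<tau>_def fun_eq_iff)
  have \<tau>_kl: "\<tau> k = l" "\<tau> l = k" unfolding \<tau>_def by simp_all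
  have S_split: "?S = ?S1 \<union> ?S2"
  proof safe
    fix \<sigma> assume \<sigma>: "\<sigma> permutes {1..n}" "\<not> \<sigma> l < \<sigma> k"
    have "\<sigma> k \<noteq> \<sigma> l" using permutes_inj[OF \<sigma>(1)] \<open>k \<noteq> l\<close> by (auto dest: injD)
    then show "\<sigma> k < \<sigma> l" using \<sigma>(2) by simp
  qed
  have T_swap: "T (\<sigma> \<circ> \<tau>) = - T \<sigma>" if \<sigma>: "\<sigma> permutes {1..n}" for \<sigma>
  proof -
    have "sign (\<sigma> \<circ> \<tau>) = sign \<sigma> * sign \<tau>"
      using \<sigma> \<tau> by (intro sign_compose) (auto intro: permutes_imp_permutation)
    also have "sign \<tau> = -1" unfolding \<tau>_def using \<open>k \<noteq> l\<close> by (simp add: sign_swap_id)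
    finally have sign: "sign (\<sigma> \<circ> \<tau>) = - sign \<sigma>" by (simp only: mult_minus1_right)
    have "(\<Prod>i=1..n. f i (z ((\<sigma> \<circ> \<tau>) i))) = (\<Prod>i=1..n. f (\<tau> i) (z (\<sigma> (\<tau> i))))"
      by (intro prod.cong refl) (auto simp: \<tau>_def Transposition.transpose_def eq)
    also have "\<dots> = (\<Prod>i=1..n. f i (z (\<sigma> i)))"
      using prod.permute[OF \<tau>, of "\<lambda>i. f i (z (\<sigma> i))"] by (simp add: o_def)
    finally show ?thesis unfolding T_def sign by simp
  qed
  have "sum T ?S2 = sum (\<lambda>\<sigma>. T (\<sigma> \<circ> \<tau>)) ?S1"
    by (rule sum.reindex_bij_witness[where i="\<lambda>\<sigma>. \<sigma> \<circ> \<tau>" and j="\<lambda>\<sigma>. \<sigma> \<circ> \<tau>"])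
       (use \<tau> in \<open>auto simp: \<tau>_involution \<tau>_kl permutes_compose\<close>)
  also have "\<dots> = - sum T ?S1" by (simp add: T_swap sum_negf)
  finally have "sum T ?S2 = - sum T ?S1" .
  moreover have "sum T ?S = sum T ?S1 + sum T ?S2"
    unfolding S_split
    by (rule sum.union_disjoint) (auto intro: finite_subset[OF _ finite_permutations[of "{1..n}"]])
  ultimately show ?thesis unfolding alternant_def T_def by simp
qed

lemma alternant_add_multiple_row:
  assumes k: "k \<in> {1..n}" and row: "\<And>t. f k t = c * g t + e * f j t"
    and j: "e = 0 \<or> j \<in> {1..n} - {k}"
  shows "alternant n f z = c * alternant n (f(k := g)) z"
proof -
  have "alternant n f z = c * alternant n (f(k := g)) z + e * alternant n (f(k := f j)) z"
    using k row by (rule alternant_linear_row)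
  moreover have "e * alternant n (f(k := f j)) z = 0"
    using j k alternant_equal_rows[of k n j "f(k := f j)"] by auto
  ultimately show ?thesis by simp
qed

text \<open>
  The rows are reduced in the order \<open>1, \<dots>, n\<close>, so a reduction step may use any other row,
  provided it is a not yet reduced row \<open>A\<^sub>j\<close> with \<open>j > k\<close> or an already reduced row \<open>B\<^sub>j\<close>
  with \<open>j < k\<close>.
\<close>

lemma alternant_reduce_rows_in_order:
  assumes step: "\<And>m. m < n \<Longrightarrow> alternant n (\<lambda>k. if k \<le> m then B k else A k) z
      = c (Suc m) * alternant n (\<lambda>k. if k \<le> Suc m then B k else A k) z"
  shows "alternant n A z = (\<Prod>k=1..n. c k) * alternant n B z"
proof -
  have reduce: "alternant n A z = (\<Prod>k=1..m. c k) * alternant n (\<lambda>k. if k \<le> m then B k else A k) z"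
    if "m \<le> n" for m
    using that
  proof (induction m)
    case 0
    have "alternant n (\<lambda>k. if k \<le> 0 then B k else A k) z = alternant n A z"
      by (rule alternant_cong) simp
    then show ?case by simp
  next
    case (Suc m)
    then show ?case by (simp add: step mult.assoc)
  qed
  moreover have "alternant n (\<lambda>k. if k \<le> n then B k else A k) z = alternant n B z"
    by (rule alternant_cong) simp
  ultimately show ?thesis using reduce[of n] by simp
qed

lemma alternant_factor_rows_next:
  assumes row: "\<And>k t. k \<in> {1..n} \<Longrightarrow> A k t = c k * B k t + e k * A (Suc k) t"
    and last: "e n = 0"
  shows "alternant n A z = (\<Prod>k=1..n. c k) * alternant n B z"
proof (rule alternant_reduce_rows_in_order)
  fix m assume "m < n"
  let ?F = "\<lambda>k. if k \<le> m then B k else A k"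
  have "alternant n ?F z = c (Suc m) * alternant n (?F(Suc m := B (Suc m))) z"
  proof (rule alternant_add_multiple_row[where j="Suc (Suc m)" and e="e (Suc m)"])
    show "e (Suc m) = 0 \<or> Suc (Suc m) \<in> {1..n} - {Suc m}"
      using \<open>m < n\<close> last by (cases "Suc m = n") auto
  qed (use \<open>m < n\<close> row in auto)
  also have "?F(Suc m := B (Suc m)) = (\<lambda>k. if k \<le> Suc m then B k else A k)" by (auto simp: fun_eq_iff)
  finally show "alternant n ?F z = c (Suc m) * alternant n (\<lambda>k. if k \<le> Suc m then B k else A k) z" .
qed

lemma alternant_factor_rows_prev:
  assumes row: "\<And>k t. k \<in> {1..n} \<Longrightarrow> A k t = c k * B k t + e k * B (k - 1) t"
    and first: "e 1 = 0"
  shows "alternant n A z = (\<Prod>k=1..n. c k) * alternant n B z"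
proof (rule alternant_reduce_rows_in_order)
  fix m assume "m < n"
  let ?F = "\<lambda>k. if k \<le> m then B k else A k"
  have "alternant n ?F z = c (Suc m) * alternant n (?F(Suc m := B (Suc m))) z"
  proof (rule alternant_add_multiple_row[where j=m and e="e (Suc m)"])
    show "e (Suc m) = 0 \<or> m \<in> {1..n} - {Suc m}"
      using \<open>m < n\<close> first by (cases "m = 0") auto
  qed (use \<open>m < n\<close> row in auto)
  also have "?F(Suc m := B (Suc m)) = (\<lambda>k. if k \<le> Suc m then B k else A k)" by (auto simp: fun_eq_iff)
  finally show "alternant n ?F z = c (Suc m) * alternant n (\<lambda>k. if k \<le> Suc m then B k else A k) z" .
qed

lemma permutes_le_imp_id:
  fixes \<sigma> :: "nat \<Rightarrow> nat"
  assumes \<sigma>: "\<sigma> permutes {1..n}" and le: "\<And>k. k \<in> {1..n} \<Longrightarrow> \<sigma> k \<le> k"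
  shows "\<sigma> = id"
proof -
  have "\<sigma> k = k" if k: "k \<in> {1..n}" for k
  proof (rule ccontr)
    assume "\<sigma> k \<noteq> k"
    with le[OF k] have "\<sigma> k < id k" by simp
    with k le have "sum \<sigma> {1..n} < sum id {1..n}"
      by (intro sum_strict_mono_ex1) auto
    moreover have "sum \<sigma> {1..n} = sum id {1..n}"
      using sum.permute[OF \<sigma>, of id] by (simp add: o_def)
    ultimately show False by simp
  qed
  with permutes_not_in[OF \<sigma>] show ?thesis by fastforce
qed

lemma alternant_upper_triangular:
  assumes zero: "\<And>k j. 1 \<le> k \<Longrightarrow> k < j \<Longrightarrow> j \<le> n \<Longrightarrow> f k (z j) = 0"
  shows "alternant n f z = (\<Prod>k=1..n. f k (z k))"
proof -
  let ?S = "{\<sigma>. \<sigma> permutes {1..n}}"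
  let ?T = "\<lambda>\<sigma>. of_int (sign \<sigma>) * (\<Prod>k=1..n. f k (z (\<sigma> k)))"
  have "?T \<sigma> = 0" if "\<sigma> \<in> ?S - {id}" for \<sigma>
  proof -
    from that have \<sigma>: "\<sigma> permutes {1..n}" and "\<sigma> \<noteq> id" by auto
    then obtain k where k: "k \<in> {1..n}" "k < \<sigma> k"
      using permutes_le_imp_id by (meson not_le)
    moreover have "\<sigma> k \<le> n" using k(1) permutes_in_image[OF \<sigma>, of k] by auto
    ultimately have "f k (z (\<sigma> k)) = 0" by (intro zero) auto
    with k(1) have "(\<Prod>k=1..n. f k (z (\<sigma> k))) = 0" by (intro prod_zero) auto
    then show ?thesis by simp
  qed
  then have "sum ?T ?S = sum ?T {id}"
    by (intro sum.mono_neutral_right) (auto simp: permutes_id finite_permutations)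
  then show ?thesis unfolding alternant_def by simp
qed

section \<open>The sign of a permutation counts its inversions\<close>

definition inversions :: "nat \<Rightarrow> (nat \<Rightarrow> nat) \<Rightarrow> (nat \<times> nat) set" where
  "inversions n p = {(i, j). 1 \<le> i \<and> i < j \<and> j \<le> n \<and> p j < p i}"

lemma perm_length_eq_card_inversions: "perm_length n p = card (inversions n p)"
  unfolding perm_length_def inversions_def ..

lemma finite_inversions: "finite (inversions n p)"
  by (rule finite_subset[of _ "{1..n} \<times> {1..n}"]) (auto simp: inversions_def)

lemma inversions_transpose_adjacent:
  assumes p: "p permutes {1..n}" and a: "1 \<le> a" "Suc a \<le> n"
  obtains e where "e \<in> {(i, j). 1 \<le> i \<and> i < j \<and> j \<le> n}"
    and "inversions n (Transposition.transpose a (Suc a) \<circ> p) =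
           (if e \<in> inversions n p then inversions n p - {e} else insert e (inversions n p))"
proof -
  let ?\<tau> = "Transposition.transpose a (Suc a)"
  have "a \<in> p ` {1..n}" "Suc a \<in> p ` {1..n}" using a permutes_image[OF p] by auto
  then obtain u v where u: "u \<in> {1..n}" "p u = a" and v: "v \<in> {1..n}" "p v = Suc a"
    by (auto simp del: atLeastAtMost_iff)
  have "u \<noteq> v" using u v by auto
  define e where "e = (min u v, max u v)"
  have flip: "(?\<tau> (p j) < ?\<tau> (p i)) = ((p j < p i) \<noteq> ((i, j) = e))" if "i < j" for i j
  proof (cases "(i, j) = e")
    case True
    then have "(i = u \<and> j = v) \<or> (i = v \<and> j = u)" using \<open>u \<noteq> v\<close> by (auto simp: e_def min_def max_def)
    moreover have "?\<tau> a = Suc a" "?\<tau> (Suc a) = a" by simp_all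
    ultimately show ?thesis using True u(2) v(2) by auto
  next
    case False
    have "p i \<notin> {a, Suc a} \<or> p j \<notin> {a, Suc a}"
    proof (rule ccontr)
      assume "\<not> ?thesis"
      moreover have "p x = p y \<longleftrightarrow> x = y" for x y using permutes_inj[OF p] by (simp add: inj_eq)
      ultimately have "i \<in> {u, v}" "j \<in> {u, v}"
        using u(2) v(2) by (metis insert_iff singletonD)+
      with \<open>i < j\<close> False show False by (auto simp: e_def min_def max_def)
    qed
    then have "(?\<tau> (p j) < ?\<tau> (p i)) = (p j < p i)"
      unfolding Transposition.transpose_def by (auto split: if_splits)
    with False show ?thesis by simp
  qed
  show ?thesis
  proof
    show "e \<in> {(i, j). 1 \<le> i \<and> i < j \<and> j \<le> n}" using u v \<open>u \<noteq> v\<close> by (auto simp: e_def min_def max_def)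
    then show "inversions n (?\<tau> \<circ> p) =
        (if e \<in> inversions n p then inversions n p - {e} else insert e (inversions n p))"
      using flip by (auto simp: inversions_def split: if_splits)
  qed
qed

lemma neg_one_power_perm_length_transpose_adjacent:
  assumes "p permutes {1..n}" "1 \<le> a" "Suc a \<le> n"
  shows "(-1::int) ^ perm_length n (Transposition.transpose a (Suc a) \<circ> p) = - ((-1) ^ perm_length n p)"
proof -
  obtain e where e: "inversions n (Transposition.transpose a (Suc a) \<circ> p) =
      (if e \<in> inversions n p then inversions n p - {e} else insert e (inversions n p))"
    using inversions_transpose_adjacent[OF assms] by blast
  show ?thesis
  proof (cases "e \<in> inversions n p")
    case True
    then obtain c where "card (inversions n p) = Suc c" "card (inversions n p - {e}) = c"
      using finite_inversions by (metis card_Suc_Diff1)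
    with True e show ?thesis by (simp add: perm_length_eq_card_inversions)
  next
    case False
    with e show ?thesis by (simp add: perm_length_eq_card_inversions finite_inversions)
  qed
qed

lemma neg_one_power_perm_length_adj_transps:
  assumes q: "q permutes {1..n}" and xs: "\<forall>x\<in>set xs. 1 \<le> x \<and> Suc x \<le> n"
  shows "(-1::int) ^ perm_length n (apply_adj_transps xs \<circ> q) = (-1) ^ length xs * (-1) ^ perm_length n q"
  using xs
proof (induction xs)
  case Nil
  then show ?case by simp
next
  case (Cons x xs)
  have "apply_adj_transps xs \<circ> q permutes {1..n}"
    using Cons.prems q by (intro permutes_compose permutes_apply_adj_transps) auto
  then have step: "(-1::int) ^ perm_length n (Transposition.transpose x (Suc x) \<circ> (apply_adj_transps xs \<circ> q))
      = - ((-1) ^ perm_length n (apply_adj_transps xs \<circ> q))"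
    using Cons.prems by (intro neg_one_power_perm_length_transpose_adjacent) auto
  have ih: "(-1::int) ^ perm_length n (apply_adj_transps xs \<circ> q) = (-1) ^ length xs * (-1) ^ perm_length n q"
    using Cons.prems by (intro Cons.IH) simp
  have "apply_adj_transps (x # xs) \<circ> q = Transposition.transpose x (Suc x) \<circ> (apply_adj_transps xs \<circ> q)"
    by (simp add: o_assoc)
  then show ?case by (simp only: step ih) simp
qed

lemma neg_one_power_perm_length_transpose:
  assumes q: "q permutes {1..n}" and "a \<in> {1..n}" "b \<in> {1..n}" "a < b"
  shows "(-1::int) ^ perm_length n (Transposition.transpose a b \<circ> q) = - ((-1) ^ perm_length n q)"
proof -
  have "\<forall>x\<in>set (adj_transp_seq a b). 1 \<le> x \<and> Suc x \<le> n"
    using assms by (simp add: set_adj_transp_seq)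
  moreover have "odd (length (adj_transp_seq a b))"
    using \<open>a < b\<close> by (simp add: length_adj_transp_seq)
  ultimately show ?thesis
    using neg_one_power_perm_length_adj_transps[OF q, of "adj_transp_seq a b"]
    unfolding adj_transp_seq_correct[OF \<open>a < b\<close>] by simp
qed

lemma sign_eq_neg_one_power_perm_length:
  assumes "p permutes {1..n}"
  shows "sign p = (-1::int) ^ perm_length n p"
  using assms finite_atLeastAtMost
proof (induction rule: permutes_induct)
  case id
  have "inversions n id = {}" by (auto simp: inversions_def)
  then show ?case unfolding perm_length_eq_card_inversions by simp
next
  case (swap a b p)
  have flip: "(-1::int) ^ perm_length n (Transposition.transpose a b \<circ> p) = - ((-1) ^ perm_length n p)"
  proof (cases "a < b")
    case True
    with swap show ?thesis by (intro neg_one_power_perm_length_transpose) auto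
  next
    case False
    with swap show ?thesis
      by (subst transpose_commute) (intro neg_one_power_perm_length_transpose, auto)
  qed
  have "sign (Transposition.transpose a b \<circ> p) = sign (Transposition.transpose a b) * sign p"
    using swap by (intro sign_compose) (auto intro: permutes_imp_permutation permutation_swap_id)
  also have "\<dots> = - sign p" using swap by (simp add: sign_swap_id)
  finally show ?case unfolding flip swap.IH .
qed

section \<open>Row reduction of the alternant\<close>

lemma prod_upper_triangle:
  fixes f :: "nat \<Rightarrow> nat \<Rightarrow> 'a::comm_monoid_mult"
  shows "(\<Prod>i=1..n. \<Prod>j=i+1..n. f i j) = (\<Prod>(i, j) \<in> {(i, j). 1 \<le> i \<and> i < j \<and> j \<le> n}. f i j)"
proof -
  have "(\<Prod>i=1..n. \<Prod>j=i+1..n. f i j) = (\<Prod>(i, j) \<in> (SIGMA i:{1..n}. {i+1..n}). f i j)"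
    by (rule prod.Sigma) auto
  also have "(SIGMA i:{1..n}. {i+1..n}) = {(i, j). 1 \<le> i \<and> i < j \<and> j \<le> n}"
    by auto
  finally show ?thesis .
qed

lemma prod_staircase_swap:
  fixes A B :: "nat \<Rightarrow> nat \<Rightarrow> 'a::comm_monoid_mult"
  assumes "Suc N = n"
  shows "(\<Prod>m=1..N. (\<Prod>k=1..m. A m k) * (\<Prod>k=m+1..n. B m k))
       = (\<Prod>k=1..n. (\<Prod>m=1..k-1. B m k) * (\<Prod>m=k..N. A m k))"
proof -
  let ?C = "\<lambda>m k. if k \<le> m then A m k else B m k"
  have row: "(\<Prod>k=1..m. A m k) * (\<Prod>k=m+1..n. B m k) = (\<Prod>k=1..n. ?C m k)" if "m \<in> {1..N}" for m
  proof -
    have "{1..n} \<inter> {k. k \<le> m} = {1..m}" "{1..n} \<inter> - {k. k \<le> m} = {m+1..n}"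
      using that assms by auto
    then show ?thesis by (simp only: prod.If_cases[OF finite_atLeastAtMost])
  qed
  have column: "(\<Prod>m=1..k-1. B m k) * (\<Prod>m=k..N. A m k) = (\<Prod>m=1..N. ?C m k)" if "k \<in> {1..n}" for k
  proof -
    have "{1..N} \<inter> {m. k \<le> m} = {k..N}" "{1..N} \<inter> - {m. k \<le> m} = {1..k-1}"
      using that assms by auto
    then show ?thesis by (simp only: prod.If_cases[OF finite_atLeastAtMost] mult.commute)
  qed
  have "(\<Prod>m=1..N. (\<Prod>k=1..m. A m k) * (\<Prod>k=m+1..n. B m k)) = (\<Prod>m=1..N. \<Prod>k=1..n. ?C m k)"
    by (rule prod.cong[OF refl], rule row)
  also have "\<dots> = (\<Prod>k=1..n. \<Prod>m=1..N. ?C m k)"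
    by (rule prod.swap)
  also have "\<dots> = (\<Prod>k=1..n. (\<Prod>m=1..k-1. B m k) * (\<Prod>m=k..N. A m k))"
    by (rule prod.cong[OF refl], rule column[symmetric])
  finally show ?thesis .
qed

lemma P_hat_eq_alternant:
  fixes x y z :: "nat \<Rightarrow> 'a::comm_ring_1"
  assumes "n \<ge> 1"
  shows "P_hat n x y z =
    alternant n (\<lambda>k t. (\<Prod>m=1..k-1. 1 - x m * t) * (\<Prod>m=k..n-1. 1 + y m * t)) z"
  unfolding P_hat_def alternant_def
proof (rule sum.cong[OF refl])
  fix \<sigma> assume "\<sigma> \<in> {\<sigma>. \<sigma> permutes {1..n}}"
  then have "(-1::'a) ^ perm_length n \<sigma> = of_int (sign \<sigma>)"
    by (simp add: sign_eq_neg_one_power_perm_length)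
  moreover have "(\<Prod>m=1..n-1. (\<Prod>k=1..m. 1 + y m * z (\<sigma> k)) * (\<Prod>k=m+1..n. 1 - x m * z (\<sigma> k)))
     = (\<Prod>k=1..n. (\<Prod>m=1..k-1. 1 - x m * z (\<sigma> k)) * (\<Prod>m=k..n-1. 1 + y m * z (\<sigma> k)))"
    using assms by (intro prod_staircase_swap) simp
  ultimately show "(-1) ^ perm_length n \<sigma> *
      (\<Prod>m=1..n-1. (\<Prod>k=1..m. 1 + y m * z (\<sigma> k)) * (\<Prod>k=m+1..n. 1 - x m * z (\<sigma> k))) =
      of_int (sign \<sigma>) * (\<Prod>k=1..n. (\<Prod>m=1..k-1. 1 - x m * z (\<sigma> k)) * (\<Prod>m=k..n-1. 1 + y m * z (\<sigma> k)))"
    by simp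
qed

text \<open>
  Stage \<open>d\<close> of the three row reductions: in \<open>xy_row\<close> the first \<open>d\<close> factors \<open>1 + y\<^sub>m t\<close>
  of row \<open>k\<close> have become \<open>t\<close>; in \<open>x_row\<close> the factors \<open>1 - x\<^sub>m t\<close> with \<open>m \<ge> n - d\<close>
  are gone; \<open>newton_row\<close> turns \<open>t\<^sup>n\<^sup>-\<^sup>k\<close> into \<open>(t - z\<^sub>k\<^sub>+\<^sub>1) \<cdots> (t - z\<^sub>n)\<close>,
  one factor \<open>t - z\<^sub>n\<^sub>-\<^sub>d\<close> per stage.
\<close>

definition xy_row :: "nat \<Rightarrow> (nat \<Rightarrow> 'a::comm_ring_1) \<Rightarrow> (nat \<Rightarrow> 'a) \<Rightarrow> nat \<Rightarrow> nat \<Rightarrow> 'a \<Rightarrow> 'a" where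
  "xy_row n x y d k t =
     t ^ min d (n - k) * (\<Prod>m=1..k-1. 1 - x m * t) * (\<Prod>m=k + min d (n - k)..n-1. 1 + y m * t)"

definition x_row :: "nat \<Rightarrow> (nat \<Rightarrow> 'a::comm_ring_1) \<Rightarrow> nat \<Rightarrow> nat \<Rightarrow> 'a \<Rightarrow> 'a" where
  "x_row n x d k t = t ^ (n - k) * (\<Prod>m=1..min k (n - d) - 1. 1 - x m * t)"

definition newton_row :: "nat \<Rightarrow> (nat \<Rightarrow> 'a::comm_ring_1) \<Rightarrow> nat \<Rightarrow> nat \<Rightarrow> 'a \<Rightarrow> 'a" where
  "newton_row n z d k t = t ^ (n - k - min d (n - k)) * (\<Prod>m = n - min d (n - k) + 1..n. t - z m)"

lemma xy_row_step:
  fixes x y :: "nat \<Rightarrow> 'a::comm_ring_1"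
  assumes "k \<in> {1..n}"
  shows "xy_row n x y d k t = (if k + d \<le> n - 1 then x k + y (k + d) else 1) * xy_row n x y (Suc d) k t
       + (if k + d \<le> n - 1 then 1 else 0) * xy_row n x y d (Suc k) t"
proof (cases "k + d \<le> n - 1")
  case True
  have mins: "min d (n - k) = d" "min (Suc d) (n - k) = Suc d" "min d (n - Suc k) = d"
    using True assms by auto
  have x_factors: "(\<Prod>m=1..Suc k - 1. 1 - x m * t) = (\<Prod>m=1..k-1. 1 - x m * t) * (1 - x k * t)"
    using assms by (cases k) (simp_all add: prod.cl_ivl_Suc)
  have y_factors: "(\<Prod>m=k+d..n-1. 1 + y m * t) = (1 + y (k + d) * t) * (\<Prod>m=Suc (k + d)..n-1. 1 + y m * t)"
    using True by (simp add: prod.atLeast_Suc_atMost)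
  show ?thesis
    unfolding xy_row_def mins using True
    by (simp only: x_factors y_factors if_True add_Suc_right add_Suc) (simp add: algebra_simps)
next
  case False
  then have "min d (n - k) = n - k" "min (Suc d) (n - k) = n - k" using assms by auto
  with False show ?thesis unfolding xy_row_def by simp
qed

lemma x_row_step:
  fixes x :: "nat \<Rightarrow> 'a::comm_ring_1"
  assumes d: "d < n - 1" and k: "k \<in> {1..n}"
  shows "x_row n x d k t = 1 * x_row n x (Suc d) k t
       + (if n - d \<le> k then - x (n - d - 1) else 0) * x_row n x (Suc d) (k - 1) t"
proof (cases "n - d \<le> k")
  case True
  define j where "j = n - d - 1"
  have mins: "min k (n - d) - 1 = j" "min k (n - Suc d) - 1 = j - 1" "min (k - 1) (n - Suc d) - 1 = j - 1"
    using True k d by (auto simp: j_def)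
  have x_factors: "(\<Prod>m=1..j. 1 - x m * t) = (\<Prod>m=1..j-1. 1 - x m * t) * (1 - x j * t)"
    using d by (cases j) (simp_all add: j_def prod.cl_ivl_Suc)
  have "n - (k - 1) = Suc (n - k)" using k by auto
  with True show ?thesis
    unfolding x_row_def mins j_def[symmetric] x_factors by (simp add: algebra_simps)
next
  case False
  then have "min k (n - d) = k" "min k (n - Suc d) = k" using k by auto
  with False show ?thesis unfolding x_row_def by simp
qed

lemma newton_row_step:
  fixes z :: "nat \<Rightarrow> 'a::comm_ring_1"
  assumes "k \<in> {1..n}"
  shows "newton_row n z d k t = 1 * newton_row n z (Suc d) k t
       + (if k + d + 1 \<le> n then z (n - d) else 0) * newton_row n z d (Suc k) t"
proof (cases "k + d + 1 \<le> n")
  case True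
  have mins: "min d (n - k) = d" "min (Suc d) (n - k) = Suc d" "min d (n - Suc k) = d"
    using True assms by auto
  have bounds: "n - Suc d + 1 = n - d" "n - d + 1 = Suc (n - d)"
    "n - k - d = Suc (n - Suc k - d)" "n - k - Suc d = n - Suc k - d"
    using True by auto
  have z_factors: "(\<Prod>m=n-d..n. t - z m) = (t - z (n - d)) * (\<Prod>m=Suc (n - d)..n. t - z m)"
    by (simp add: prod.atLeast_Suc_atMost)
  show ?thesis
    unfolding newton_row_def mins bounds z_factors using True by (simp add: algebra_simps)
next
  case False
  then have "min d (n - k) = n - k" "min (Suc d) (n - k) = n - k" using assms by auto
  with False show ?thesis unfolding newton_row_def by simp
qed

lemma alternant_xy_row_stages:
  fixes x y z :: "nat \<Rightarrow> 'a::comm_ring_1"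
  assumes "n \<ge> 1" and "d \<le> n - 1"
  shows "alternant n (xy_row n x y 0) z =
    (\<Prod>d'<d. \<Prod>k=1..n. if k + d' \<le> n - 1 then x k + y (k + d') else 1) * alternant n (xy_row n x y d) z"
  using assms(2)
proof (induction d)
  case 0
  then show ?case by simp
next
  case (Suc d)
  have "alternant n (xy_row n x y d) z =
      (\<Prod>k=1..n. if k + d \<le> n - 1 then x k + y (k + d) else 1) * alternant n (xy_row n x y (Suc d)) z"
    by (rule alternant_factor_rows_next[where e="\<lambda>k. if k + d \<le> n - 1 then 1 else 0"], erule xy_row_step)
       (use assms(1) in simp)
  with Suc show ?case by (simp add: mult.assoc)
qed

lemma alternant_x_row_stages:
  fixes x z :: "nat \<Rightarrow> 'a::comm_ring_1"
  assumes "d \<le> n - 1"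
  shows "alternant n (x_row n x 0) z = alternant n (x_row n x d) z"
  using assms
proof (induction d)
  case 0
  then show ?case by simp
next
  case (Suc d)
  have "alternant n (x_row n x d) z = (\<Prod>k=1..n. 1) * alternant n (x_row n x (Suc d)) z"
    by (rule alternant_factor_rows_prev[where e="\<lambda>k. if n - d \<le> k then - x (n - d - 1) else 0"],
        rule x_row_step) (use Suc.prems in auto)
  with Suc show ?case by simp
qed

lemma alternant_newton_row_stages:
  fixes z :: "nat \<Rightarrow> 'a::comm_ring_1"
  shows "alternant n (newton_row n z 0) z = alternant n (newton_row n z d) z"
proof (induction d)
  case 0
  then show ?case by simp
next
  case (Suc d)
  have "alternant n (newton_row n z d) z = (\<Prod>k=1..n. 1) * alternant n (newton_row n z (Suc d)) z"
    by (rule alternant_factor_rows_next[where e="\<lambda>k. if k + d + 1 \<le> n then z (n - d) else 0"],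
        erule newton_row_step) simp
  with Suc show ?case by simp
qed

lemma alternant_vandermonde:
  fixes z :: "nat \<Rightarrow> 'a::comm_ring_1"
  shows "alternant n (\<lambda>k t. t ^ (n - k)) z = (\<Prod>(i, j) \<in> {(i, j). 1 \<le> i \<and> i < j \<and> j \<le> n}. z i - z j)"
proof -
  have newton: "newton_row n z n k t = (\<Prod>m=k+1..n. t - z m)" if "k \<le> n" for k t
  proof -
    have "min n (n - k) = n - k" "n - (n - k) + 1 = k + 1" using that by auto
    then show ?thesis unfolding newton_row_def by simp
  qed
  have "alternant n (\<lambda>k t. t ^ (n - k)) z = alternant n (newton_row n z 0) z"
    by (rule alternant_cong) (simp add: newton_row_def)
  also have "\<dots> = alternant n (newton_row n z n) z"
    by (rule alternant_newton_row_stages)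
  also have "\<dots> = (\<Prod>k=1..n. newton_row n z n k (z k))"
  proof (rule alternant_upper_triangular)
    fix k j assume "1 \<le> k" "k < j" "j \<le> n"
    then show "newton_row n z n k (z j) = 0" by (auto simp: newton intro!: prod_zero bexI[of _ j])
  qed
  also have "\<dots> = (\<Prod>k=1..n. \<Prod>m=k+1..n. z k - z m)"
    by (rule prod.cong) (simp_all add: newton)
  finally show ?thesis by (simp only: prod_upper_triangle)
qed

lemma alternant_x_rows:
  fixes x z :: "nat \<Rightarrow> 'a::comm_ring_1"
  shows "alternant n (\<lambda>k t. t ^ (n - k) * (\<Prod>m=1..k-1. 1 - x m * t)) z = alternant n (\<lambda>k t. t ^ (n - k)) z"
proof -
  have "alternant n (\<lambda>k t. t ^ (n - k) * (\<Prod>m=1..k-1. 1 - x m * t)) z = alternant n (x_row n x 0) z"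
    by (rule alternant_cong) (simp add: x_row_def)
  also have "\<dots> = alternant n (x_row n x (n - 1)) z"
    by (rule alternant_x_row_stages) simp
  also have "\<dots> = alternant n (\<lambda>k t. t ^ (n - k)) z"
    by (rule alternant_cong) (simp add: x_row_def)
  finally show ?thesis .
qed

lemma prod_stage_factors:
  fixes x y :: "nat \<Rightarrow> 'a::comm_ring_1"
  assumes "n \<ge> 1"
  shows "(\<Prod>d<n-1. \<Prod>k=1..n. if k + d \<le> n - 1 then x k + y (k + d) else 1) =
    (\<Prod>i=1..n-1. x i + y i) * (\<Prod>(i, j) \<in> {(i, j). 1 \<le> i \<and> i < j \<and> j \<le> n - 1}. x i + y j)"
proof -
  have row: "(\<Prod>d<n-1. if k + d \<le> n - 1 then x k + y (k + d) else 1) = (\<Prod>j=k..n-1. x k + y j)"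
    if "k \<ge> 1" for k
  proof -
    have "(\<Prod>d<n-1. if k + d \<le> n - 1 then x k + y (k + d) else 1)
        = (\<Prod>d\<in>{d\<in>{..<n-1}. k + d \<le> n - 1}. x k + y (k + d))"
      by (rule prod.inter_filter[symmetric]) simp
    also have "\<dots> = (\<Prod>j=k..n-1. x k + y j)"
      by (rule prod.reindex_bij_witness[where i="\<lambda>j. j - k" and j="\<lambda>d. k + d"]) (use that in auto)
    finally show ?thesis .
  qed
  have "(\<Prod>d<n-1. \<Prod>k=1..n. if k + d \<le> n - 1 then x k + y (k + d) else 1)
      = (\<Prod>k=1..n. \<Prod>j=k..n-1. x k + y j)"
    by (subst prod.swap, intro prod.cong refl row) auto
  also have "\<dots> = (\<Prod>k=1..n-1. \<Prod>j=k..n-1. x k + y j)"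
    using assms by (cases n) (simp_all add: prod.cl_ivl_Suc)
  also have "\<dots> = (\<Prod>k=1..n-1. (x k + y k) * (\<Prod>j=k+1..n-1. x k + y j))"
    by (rule prod.cong) (auto simp: prod.atLeast_Suc_atMost)
  finally show ?thesis by (simp only: prod.distrib prod_upper_triangle)
qed

lemma alternant_xy_rows:
  fixes x y z :: "nat \<Rightarrow> 'a::comm_ring_1"
  assumes "n \<ge> 1"
  shows "alternant n (\<lambda>k t. (\<Prod>m=1..k-1. 1 - x m * t) * (\<Prod>m=k..n-1. 1 + y m * t)) z =
    (\<Prod>i=1..n-1. x i + y i) * (\<Prod>(i, j) \<in> {(i, j). 1 \<le> i \<and> i < j \<and> j \<le> n - 1}. x i + y j) *
    alternant n (\<lambda>k t. t ^ (n - k) * (\<Prod>m=1..k-1. 1 - x m * t)) z"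
proof -
  have "alternant n (\<lambda>k t. (\<Prod>m=1..k-1. 1 - x m * t) * (\<Prod>m=k..n-1. 1 + y m * t)) z =
      alternant n (xy_row n x y 0) z"
    by (rule alternant_cong) (simp add: xy_row_def)
  also have "\<dots> = (\<Prod>d<n-1. \<Prod>k=1..n. if k + d \<le> n - 1 then x k + y (k + d) else 1) *
      alternant n (xy_row n x y (n - 1)) z"
    using assms by (rule alternant_xy_row_stages) simp
  also have "alternant n (xy_row n x y (n - 1)) z =
      alternant n (\<lambda>k t. t ^ (n - k) * (\<Prod>m=1..k-1. 1 - x m * t)) z"
  proof (rule alternant_cong)
    fix k t assume "k \<in> {1..n}"
    then have "min (n - 1) (n - k) = n - k" "k + (n - k) = n" "{n..n - 1} = {}" by auto
    then show "xy_row n x y (n - 1) k t = t ^ (n - k) * (\<Prod>m=1..k-1. 1 - x m * t)"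
      unfolding xy_row_def by simp
  qed
  finally show ?thesis using assms by (simp only: prod_stage_factors)
qed

theorem mainTheorem7:
  fixes n :: nat and x y z :: "nat \<Rightarrow> 'a::comm_ring_1"
  assumes "n \<ge> 2"
  shows "P_hat n x y z =
    (\<Prod>i=1..n-1. x i + y i) *
    (\<Prod>(i, j) \<in> {(i, j). 1 \<le> i \<and> i < j \<and> j \<le> n - 1}. x i + y j) *
    (\<Prod>(i, j) \<in> {(i, j). 1 \<le> i \<and> i < j \<and> j \<le> n}. z i - z j)"
proof -
  have "n \<ge> 1" using assms by simp
  then show ?thesis
    by (simp only: P_hat_eq_alternant alternant_xy_rows alternant_x_rows alternant_vandermonde)
qed

end
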